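(* Consider a network of $K\ge2$ sensors with $f^1_m=\dots=f^K_m=f_m$ for all $m=0,\dots,M-1$. Fix a state $m$ and let $\bar\phi^{0,\max}_m=\sum_jp^j_m\phi^{0,j}_m$ be a maximin quantizer for state $m$ in the single-sensor problem with densities $f_0,\dots,f_{M-1}$. For each $j$ let $\phi^{\cdot,j}_m=(\phi^{0,j}_m,\dots,\phi^{0,j}_m)$ be the $K$-fold replication, and let $\bar\phi^*_m=\sum_jp^j_m\phi^{\cdot,j}_m$. Then $\bar\phi^*_m$ is a maximin quantizer vector for state $m$.
   Context: Single-sensor notions: a raw observation $X$ has density $f_m$ under state $m\in\{0,\dots,M-1\}$ (probability $\mathbf P_m$); deterministic quantizers are measurable maps to $\{0,1\}$ (set $\Phi$); a randomized quantizer $\bar\phi=\sum_jp^j\phi^j$ is a probability distribution on a countable subset of $\Phi$; $\bar\Phi$ is the set of all quantizers; $f_m(u;\phi)=\mathbf P_m(\phi(X)=u)$, $I(m,m';\phi)=\sum_uf_m(u;\phi)\log\frac{f_m(u;\phi)}{f_{m'}(u;\phi)}$, $I(m,m';\bar\phi)=\sum_jp^jI(m,m';\phi^j)$, $I(m;\bar\phi)=\min_{m'\ne m}I(m,m';\bar\phi)$, and a maximin quantizer for $m$ maximizes $I(m;\cdot)$ over $\bar\Phi$. Multi-sensor setting: sensor $k=1,\dots,K$ observes $X^k$ with density $f^k_m$ under $\mathbf P_m$, independent across sensors. A deterministic quantizer vector is $\phi=(\phi^1,\dots,\phi^K)$ with $\phi^k$ a deterministic quantizer at sensor $k$; $\Phi^{(K)}$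 is their set. A randomized quantizer vector is $\bar\phi=\sum_jp^j\phi^{\cdot,j}$, a probability distribution on a countable subset $\{\phi^{\cdot,j}\}\subset\Phi^{(K)}$; $\overline{\Phi^{(K)}}$ denotes all quantizer vectors. K-L divergences: $I(m,m';\phi)=\sum_{k=1}^KI(m,m';\phi^k)$ (with $I(m,m';\phi^k)$ computed from $f^k_m,f^k_{m'}$) and $I(m,m';\bar\phi)=\sum_jp^jI(m,m';\phi^{\cdot,j})$; $I(m;\bar\phi)=\min_{m'\neq m}I(m,m';\bar\phi)$; a maximin quantizer vector for state $m$ is a $\bar\phi\in\overline{\Phi^{(K)}}$ maximizing $I(m;\bar\phi)$ over $\overline{\Phi^{(K)}}$. *)

theory Defs
  imports "HOL-Probability.Probability"
begin

text \<open>Observation space N (a measure space); f m is the density of the raw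
observation under state m, with respect to N. Quantizer outputs {0,1} are
represented by bool.\<close>

definition densities :: "'a measure \<Rightarrow> nat \<Rightarrow> (nat \<Rightarrow> 'a \<Rightarrow> real) \<Rightarrow> bool" where
  "densities N M f \<longleftrightarrow> (\<forall>m<M. f m \<in> borel_measurable N \<and> (\<forall>x\<in>space N. 0 \<le> f m x)
      \<and> prob_space (density N (\<lambda>x. ennreal (f m x))))"

definition det_quantizers :: "'a measure \<Rightarrow> ('a \<Rightarrow> bool) set" where
  "det_quantizers N = {\<phi>. \<phi> \<in> N \<rightarrow>\<^sub>M count_space UNIV}"

definition qprob :: "'a measure \<Rightarrow> (nat \<Rightarrow> 'a \<Rightarrow> real) \<Rightarrow> nat \<Rightarrow> ('a \<Rightarrow> bool) \<Rightarrow> bool \<Rightarrow> real" where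
  "qprob N f m \<phi> u = measure (density N (\<lambda>x. ennreal (f m x))) {x \<in> space N. \<phi> x = u}"

definition kl_det :: "'a measure \<Rightarrow> (nat \<Rightarrow> 'a \<Rightarrow> real) \<Rightarrow> nat \<Rightarrow> nat \<Rightarrow> ('a \<Rightarrow> bool) \<Rightarrow> ennreal" where
  "kl_det N f m m' \<phi> =
     (if (\<exists>u. qprob N f m \<phi> u > 0 \<and> qprob N f m' \<phi> u = 0) then \<top>
      else ennreal (\<Sum>u\<in>UNIV. if qprob N f m \<phi> u = 0 then 0
                   else qprob N f m \<phi> u * ln (qprob N f m \<phi> u / qprob N f m' \<phi> u)))"

text \<open>Randomized quantizer: a probability distribution (pmf, countable support)
on deterministic quantizers.\<close>
definition rand_quantizer :: "'a measure \<Rightarrow> ('a \<Rightarrow> bool) pmf \<Rightarrow> bool" where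
  "rand_quantizer N q \<longleftrightarrow> set_pmf q \<subseteq> det_quantizers N"

definition kl_rand :: "'a measure \<Rightarrow> (nat \<Rightarrow> 'a \<Rightarrow> real) \<Rightarrow> nat \<Rightarrow> nat \<Rightarrow> ('a \<Rightarrow> bool) pmf \<Rightarrow> ennreal" where
  "kl_rand N f m m' q = (\<integral>\<^sup>+ \<phi>. kl_det N f m m' \<phi> \<partial>measure_pmf q)"

definition kl_min :: "'a measure \<Rightarrow> (nat \<Rightarrow> 'a \<Rightarrow> real) \<Rightarrow> nat \<Rightarrow> nat \<Rightarrow> ('a \<Rightarrow> bool) pmf \<Rightarrow> ennreal" where
  "kl_min N f M m q = (INF m'\<in>{m'. m' < M \<and> m' \<noteq> m}. kl_rand N f m m' q)"

definition maximin_quantizer :: "'a measure \<Rightarrow> (nat \<Rightarrow> 'a \<Rightarrow> real) \<Rightarrow> nat \<Rightarrow> nat \<Rightarrow> ('a \<Rightarrow> bool) pmf \<Rightarrow> bool" where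
  "maximin_quantizer N f M m q \<longleftrightarrow> rand_quantizer N q \<and>
     (\<forall>q'. rand_quantizer N q' \<longrightarrow> kl_min N f M m q' \<le> kl_min N f M m q)"

text \<open>Multi-sensor, all K sensors with the same observation space N and densities f.
Sensors are indexed by k < K; a deterministic quantizer vector is a map
k \<mapsto> phi^k (values at k \<ge> K are irrelevant).\<close>
definition det_quantizer_vecs :: "'a measure \<Rightarrow> nat \<Rightarrow> (nat \<Rightarrow> 'a \<Rightarrow> bool) set" where
  "det_quantizer_vecs N K = {\<phi>. \<forall>k<K. \<phi> k \<in> det_quantizers N}"

definition kl_vec_det :: "'a measure \<Rightarrow> (nat \<Rightarrow> 'a \<Rightarrow> real) \<Rightarrow> nat \<Rightarrow> nat \<Rightarrow> nat \<Rightarrow> (nat \<Rightarrow> 'a \<Rightarrow> bool) \<Rightarrow> ennreal" where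
  "kl_vec_det N f K m m' \<phi> = (\<Sum>k<K. kl_det N f m m' (\<phi> k))"

definition rand_quantizer_vec :: "'a measure \<Rightarrow> nat \<Rightarrow> (nat \<Rightarrow> 'a \<Rightarrow> bool) pmf \<Rightarrow> bool" where
  "rand_quantizer_vec N K q \<longleftrightarrow> set_pmf q \<subseteq> det_quantizer_vecs N K"

definition kl_vec_rand :: "'a measure \<Rightarrow> (nat \<Rightarrow> 'a \<Rightarrow> real) \<Rightarrow> nat \<Rightarrow> nat \<Rightarrow> nat \<Rightarrow> (nat \<Rightarrow> 'a \<Rightarrow> bool) pmf \<Rightarrow> ennreal" where
  "kl_vec_rand N f K m m' q = (\<integral>\<^sup>+ \<phi>. kl_vec_det N f K m m' \<phi> \<partial>measure_pmf q)"

definition kl_vec_min :: "'a measure \<Rightarrow> (nat \<Rightarrow> 'a \<Rightarrow> real) \<Rightarrow> nat \<Rightarrow> nat \<Rightarrow> nat \<Rightarrow> (nat \<Rightarrow> 'a \<Rightarrow> bool) pmf \<Rightarrow> ennreal" where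
  "kl_vec_min N f M K m q = (INF m'\<in>{m'. m' < M \<and> m' \<noteq> m}. kl_vec_rand N f K m m' q)"

definition maximin_quantizer_vec :: "'a measure \<Rightarrow> (nat \<Rightarrow> 'a \<Rightarrow> real) \<Rightarrow> nat \<Rightarrow> nat \<Rightarrow> nat \<Rightarrow> (nat \<Rightarrow> 'a \<Rightarrow> bool) pmf \<Rightarrow> bool" where
  "maximin_quantizer_vec N f M K m q \<longleftrightarrow> rand_quantizer_vec N K q \<and>
     (\<forall>q'. rand_quantizer_vec N K q' \<longrightarrow> kl_vec_min N f M K m q' \<le> kl_vec_min N f M K m q)"

end

theory Submission
  imports Defs
begin

(*
  The key observation is that the K-L divergence of a randomized quantizer
  vector q only depends on the "sensor average" of q: the randomized
  single-sensor quantizer obtained by choosing a sensor k uniformly at random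
  and then using the k-th component of a quantizer vector drawn from q.
  Precisely, I(m,m';q) = K * I(m,m';avg q) for every m', hence the maximin
  objective of q is K times the single-sensor objective of avg q.  The
  K-fold replication of a single-sensor quantizer p satisfies the same
  identity with p itself in place of avg q.  Since avg q is an admissible
  single-sensor quantizer, maximality of p gives
    I(m;q) = K * I(m;avg q) <= K * I(m;p) = I(m; replication of p).
*)

text \<open>Multiplication by a finite positive constant is an order isomorphism
  of the extended non-negative reals, so it commutes with infima.\<close>
lemma ennreal_INF_const_mult:
  fixes c :: ennreal
  assumes "c \<noteq> 0" "c \<noteq> \<top>"
  shows "(INF i\<in>S. c * g i) = c * (INF i\<in>S. g i)"
proof (rule antisym)
  have "(INF i\<in>S. c * g i) / c \<le> g i" if "i \<in> S" for i
  proof -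
    have "(INF i\<in>S. c * g i) / c \<le> c * g i / c"
      using that by (intro divide_right_mono_ennreal INF_lower)
    also have "\<dots> = g i"
      using assms by (metis ennreal_mult_divide_eq mult.commute)
    finally show ?thesis .
  qed
  then have "c * ((INF i\<in>S. c * g i) / c) \<le> c * (INF i\<in>S. g i)"
    by (intro mult_left_mono INF_greatest) simp_all
  then show "(INF i\<in>S. c * g i) \<le> c * (INF i\<in>S. g i)"
    using assms by (metis ennreal_times_divide ennreal_mult_divide_eq mult.commute)
next
  show "c * (INF i\<in>S. g i) \<le> (INF i\<in>S. c * g i)"
    by (intro INF_greatest mult_left_mono INF_lower) simp_all
qed

definition sensor_average :: "nat \<Rightarrow> (nat \<Rightarrow> 'a \<Rightarrow> bool) pmf \<Rightarrow> ('a \<Rightarrow> bool) pmf" where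
  "sensor_average K q = bind_pmf (pmf_of_set {..<K}) (\<lambda>k. map_pmf (\<lambda>\<phi>. \<phi> k) q)"

lemma rand_quantizer_sensor_average:
  assumes "K > 0" and "rand_quantizer_vec N K q"
  shows "rand_quantizer N (sensor_average K q)"
proof -
  have "set_pmf (pmf_of_set {..<K}) = {..<K}"
    using assms(1) by (intro set_pmf_of_set) auto
  then show ?thesis
    using assms(2)
    unfolding sensor_average_def rand_quantizer_vec_def rand_quantizer_def det_quantizer_vecs_def
    by auto
qed

text \<open>The divergence of a quantizer vector is K times the divergence of its
  sensor average: both are the sum over sensors of the expected component
  divergences, the latter divided by K.\<close>
lemma kl_vec_rand_sensor_average:
  assumes "K > 0"
  shows "kl_vec_rand N f K m m' q = of_nat K * kl_rand N f m m' (sensor_average K q)"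
proof -
  define s where "s = (\<Sum>k<K. \<integral>\<^sup>+ \<phi>. kl_det N f m m' (\<phi> k) \<partial>measure_pmf q)"
  have "kl_vec_rand N f K m m' q = s"
    unfolding s_def kl_vec_rand_def kl_vec_det_def by (rule nn_integral_sum) simp
  moreover have "kl_rand N f m m' (sensor_average K q) = s / of_nat K"
    unfolding s_def kl_rand_def sensor_average_def
    using assms by (simp add: nn_integral_pmf_of_set lessThan_empty_iff)
  moreover have "of_nat K * (s / of_nat K) = s"
    using assms by (metis ennreal_times_divide ennreal_mult_divide_eq mult.commute
        ennreal_of_nat_neq_top of_nat_eq_0_iff ennreal_eq_0_iff not_gr0)
  ultimately show ?thesis by simp
qed

lemma kl_vec_min_sensor_average:
  assumes "K > 0"
  shows "kl_vec_min N f M K m q = of_nat K * kl_min N f M m (sensor_average K q)"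
  unfolding kl_vec_min_def kl_min_def kl_vec_rand_sensor_average[OF assms]
  using assms by (intro ennreal_INF_const_mult) auto

lemma rand_quantizer_vec_replicate:
  assumes "rand_quantizer N p"
  shows "rand_quantizer_vec N K (map_pmf (\<lambda>\<phi>. \<lambda>k. \<phi>) p)"
  using assms unfolding rand_quantizer_vec_def rand_quantizer_def det_quantizer_vecs_def by auto

lemma kl_vec_rand_replicate:
  "kl_vec_rand N f K m m' (map_pmf (\<lambda>\<phi>. \<lambda>k. \<phi>) p) = of_nat K * kl_rand N f m m' p"
  unfolding kl_vec_rand_def kl_vec_det_def kl_rand_def by (simp add: nn_integral_cmult)

lemma kl_vec_min_replicate:
  assumes "K > 0"
  shows "kl_vec_min N f M K m (map_pmf (\<lambda>\<phi>. \<lambda>k. \<phi>) p) = of_nat K * kl_min N f M m p"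
  unfolding kl_vec_min_def kl_min_def kl_vec_rand_replicate
  using assms by (intro ennreal_INF_const_mult) auto

theorem proposition5p1:
  fixes N :: "'a measure" and f :: "nat \<Rightarrow> 'a \<Rightarrow> real" and M K m :: nat
    and p :: "('a \<Rightarrow> bool) pmf"
  assumes "densities N M f"
    and "K \<ge> 2"
    and "m < M"
    and "maximin_quantizer N f M m p"
  shows "maximin_quantizer_vec N f M K m (map_pmf (\<lambda>\<phi>. \<lambda>k. \<phi>) p)"
proof -
  have K: "K > 0" using assms(2) by simp
  have p: "rand_quantizer N p"
    and p_max: "\<And>q. rand_quantizer N q \<Longrightarrow> kl_min N f M m q \<le> kl_min N f M m p"
    using assms(4) unfolding maximin_quantizer_def by auto
  have "kl_vec_min N f M K m q \<le> kl_vec_min N f M K m (map_pmf (\<lambda>\<phi>. \<lambda>k. \<phi>) p)"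
    if q: "rand_quantizer_vec N K q" for q
  proof -
    have "kl_vec_min N f M K m q = of_nat K * kl_min N f M m (sensor_average K q)"
      using K by (rule kl_vec_min_sensor_average)
    also have "\<dots> \<le> of_nat K * kl_min N f M m p"
      using p_max[OF rand_quantizer_sensor_average[OF K q]] by (rule mult_left_mono) simp
    also have "\<dots> = kl_vec_min N f M K m (map_pmf (\<lambda>\<phi>. \<lambda>k. \<phi>) p)"
      using K by (rule kl_vec_min_replicate[symmetric])
    finally show ?thesis .
  qed
  then show ?thesis
    unfolding maximin_quantizer_vec_def using rand_quantizer_vec_replicate[OF p] by blast
qed

end
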